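(* Let $E\to M$ be a holomorphic Lie algebroid with $m=n=\operatorname{rank}\rho$, so that the anchor matrix $(\rho^k_\alpha(z))$ is invertible with inverse $(\rho^\alpha_k(z))$. Let $(T'M,L)$ be a complex Lagrange space, with metric tensor $g_{i\bar j}=\frac{\partial^2 L}{\partial\eta^i\partial\bar\eta^j}$ and Chern–Lagrange nonlinear connection $N^i_k=g^{\bar j i}\frac{\partial^2L}{\partial z^k\partial\bar\eta^j}$. Put $L^*(z,u)=L(z,\eta(u))$ with $\eta^k=\rho^k_\alpha(z)u^\alpha$, $g_{\alpha\bar\beta}=\frac{\partial^2L^*}{\partial u^\alpha\partial\bar u^\beta}=\rho^i_\alpha\overline{\rho^j_\beta}\,g_{i\bar j}$, with inverse $g^{\bar\beta\alpha}$. Then the nonlinear connection induced on $E$ by $N^h_k$, \[ \overset{*}{N}{}^\alpha_k(z,u)=\rho^\alpha_h N^h_k(z,\eta)-\frac{\partial\rho^\alpha_h}{\partial z^k}\eta^h,\qquad \eta^h=\rho^h_\beta u^\beta, \] is given by \[ \overset{*}{N}{}^\alpha_k=g^{\bar\beta\alpha}\frac{\partial^2 L^*}{\partial z^k\partial\bar u^\beta}. \]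
   Context: $M$ is a complex $n$-manifold with local coordinates $(z^k)$; $T'M$ has induced coordinates $(z^k,\eta^k)$. $E\to M$ is a holomorphic Lie algebroid of rank $m$ with local coordinates $(z^k,u^\alpha)$ and anchor $\rho(e_\alpha)=\rho^k_\alpha(z)\partial_{z^k}$ with $\rho^k_\alpha$ holomorphic. A complex Lagrange space $(T'M,L)$ is given by a real function $L(z,\eta)$ on $T'M$ whose metric tensor $g_{i\bar j}=\partial^2L/\partial\eta^i\partial\bar\eta^j$ is nondegenerate; $g^{\bar j i}$ denotes the inverse, $g^{\bar j i}g_{k\bar j}=\delta^i_k$, and similarly $g^{\bar\beta\alpha}g_{\gamma\bar\beta}=\delta^\alpha_\gamma$. *)

theory Defs
  imports "HOL-Analysis.Analysis"
begin

text \<open>Local coordinate setting: a chart domain U of M (open in complex^'n), fibre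
coordinates eta of T'M and u of E (rank m = n, so the same finite index type 'n).
Matrices are indexed as (A $ row $ column): (rho z) $ k $ alpha = rho^k_alpha(z).\<close>

definition wirt :: "(complex^'n \<Rightarrow> complex) \<Rightarrow> complex^'n \<Rightarrow> 'n \<Rightarrow> complex" where
  "wirt f w i = (frechet_derivative f (at w) (axis i 1)
                 - \<i> * frechet_derivative f (at w) (axis i \<i>)) / 2"

definition wirtc :: "(complex^'n \<Rightarrow> complex) \<Rightarrow> complex^'n \<Rightarrow> 'n \<Rightarrow> complex" where
  "wirtc f w i = (frechet_derivative f (at w) (axis i 1)
                 + \<i> * frechet_derivative f (at w) (axis i \<i>)) / 2"

definition d_z :: "(complex^'n \<Rightarrow> complex^'n \<Rightarrow> complex) \<Rightarrow> complex^'n \<Rightarrow> complex^'n \<Rightarrow> 'n \<Rightarrow> complex" where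
  "d_z F z y k = wirt (\<lambda>z'. F z' y) z k"

definition d_y :: "(complex^'n \<Rightarrow> complex^'n \<Rightarrow> complex) \<Rightarrow> complex^'n \<Rightarrow> complex^'n \<Rightarrow> 'n \<Rightarrow> complex" where
  "d_y F z y i = wirt (\<lambda>y'. F z y') y i"

definition d_ybar :: "(complex^'n \<Rightarrow> complex^'n \<Rightarrow> complex) \<Rightarrow> complex^'n \<Rightarrow> complex^'n \<Rightarrow> 'n \<Rightarrow> complex" where
  "d_ybar F z y j = wirtc (\<lambda>y'. F z y') y j"

definition holo_on :: "(complex^'n) set \<Rightarrow> (complex^'n \<Rightarrow> complex) \<Rightarrow> bool" where
  "holo_on U f \<longleftrightarrow> (\<forall>z\<in>U. \<exists>D. (f has_derivative D) (at z) \<and> (\<forall>c x. D (c *s x) = c * D x))"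

definition C2_on :: "'a::real_normed_vector set \<Rightarrow> ('a \<Rightarrow> 'b::real_normed_vector) \<Rightarrow> bool" where
  "C2_on S f \<longleftrightarrow> open S \<and> f differentiable_on S \<and>
     (\<forall>v. (\<lambda>p. frechet_derivative f (at p) v) differentiable_on S) \<and>
     (\<forall>v w. continuous_on S (\<lambda>p. frechet_derivative (\<lambda>q. frechet_derivative f (at q) v) (at p) w))"

definition Lc :: "(complex^'n \<Rightarrow> complex^'n \<Rightarrow> real) \<Rightarrow> complex^'n \<Rightarrow> complex^'n \<Rightarrow> complex" where
  "Lc L z y = complex_of_real (L z y)"

definition metric :: "(complex^'n \<Rightarrow> complex^'n \<Rightarrow> real) \<Rightarrow> complex^'n \<Rightarrow> complex^'n \<Rightarrow> complex^'n^'n" where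
  "metric L z y = (\<chi> i j. d_y (\<lambda>z' y'. d_ybar (Lc L) z' y' j) z y i)"

text \<open>Inverse metric: (metric_inv L z eta) $ j $ i = g^{conj j i}, so that
  sum_j g^{conj j i} g_{k conj j} = delta^i_k.\<close>
definition metric_inv :: "(complex^'n \<Rightarrow> complex^'n \<Rightarrow> real) \<Rightarrow> complex^'n \<Rightarrow> complex^'n \<Rightarrow> complex^'n^'n" where
  "metric_inv L z y = matrix_inv (metric L z y)"

definition CL_conn :: "(complex^'n \<Rightarrow> complex^'n \<Rightarrow> real) \<Rightarrow> complex^'n \<Rightarrow> complex^'n \<Rightarrow> 'n \<Rightarrow> 'n \<Rightarrow> complex" where
  "CL_conn L z y i k = (\<Sum>j\<in>UNIV. metric_inv L z y $ j $ i * d_z (\<lambda>z' y'. d_ybar (Lc L) z' y' j) z y k)"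

definition Lstar :: "(complex^'n \<Rightarrow> complex^'n^'n) \<Rightarrow> (complex^'n \<Rightarrow> complex^'n \<Rightarrow> real) \<Rightarrow> complex^'n \<Rightarrow> complex^'n \<Rightarrow> real" where
  "Lstar \<rho> L z u = L z (\<rho> z *v u)"

definition induced_conn :: "(complex^'n \<Rightarrow> complex^'n^'n) \<Rightarrow> (complex^'n \<Rightarrow> complex^'n \<Rightarrow> real) \<Rightarrow> complex^'n \<Rightarrow> complex^'n \<Rightarrow> 'n \<Rightarrow> 'n \<Rightarrow> complex" where
  "induced_conn \<rho> L z u \<alpha> k =
     (let \<eta> = \<rho> z *v u in
      (\<Sum>h\<in>UNIV. matrix_inv (\<rho> z) $ \<alpha> $ h * CL_conn L z \<eta> h k)
      - (\<Sum>h\<in>UNIV. wirt (\<lambda>z'. matrix_inv (\<rho> z') $ \<alpha> $ h) z k * \<eta> $ h))"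

end

theory Submission
  imports Defs
begin

text \<open>By the chain rule for Wirtinger derivatives, the metric of \<open>L\<^sup>*(z, u) = L(z, \<rho>(z) u)\<close>
is the congruence \<open>\<rho>\<^sup>T g \<rho>\<close> (the last factor conjugated), and since \<open>\<rho>\<close> is holomorphic the
mixed derivative \<open>\<partial>\<^sub>z \<partial>\<^sub>u\<close> (second one antiholomorphic) of \<open>L\<^sup>*\<close> is the conjugate of \<open>\<rho>\<close>
applied to \<open>\<partial>\<^sub>z \<partial>\<^sub>\<eta> L + g (\<partial>\<^sub>z \<rho>) u\<close>, the second term coming from the \<open>z\<close>-dependence of
\<open>\<eta> = \<rho>(z) u\<close>. Undoing the congruence turns the first term into \<open>\<rho>\<^sup>-\<^sup>1 N\<close> and the second
into \<open>\<rho>\<^sup>-\<^sup>1 (\<partial>\<^sub>z \<rho>) u = - (\<partial>\<^sub>z \<rho>\<^sup>-\<^sup>1) \<eta>\<close>, which is the correction term of the induced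
connection.\<close>

section \<open>Wirtinger coefficients of real-linear maps\<close>

definition wirt_coeff :: "(complex^'n \<Rightarrow> complex) \<Rightarrow> 'n \<Rightarrow> complex" where
  "wirt_coeff D k = (D (axis k 1) - \<i> * D (axis k \<i>)) / 2"

definition wirtc_coeff :: "(complex^'n \<Rightarrow> complex) \<Rightarrow> 'n \<Rightarrow> complex" where
  "wirtc_coeff D k = (D (axis k 1) + \<i> * D (axis k \<i>)) / 2"

lemma wirt_eq_wirt_coeff: "(f has_derivative D) (at w) \<Longrightarrow> wirt f w k = wirt_coeff D k"
  by (simp add: wirt_def wirt_coeff_def frechet_derivative_at[symmetric])

lemma wirtc_eq_wirtc_coeff: "(f has_derivative D) (at w) \<Longrightarrow> wirtc f w k = wirtc_coeff D k"
  by (simp add: wirtc_def wirtc_coeff_def frechet_derivative_at[symmetric])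

lemma wirt_coeff_sum: "wirt_coeff (\<lambda>w. \<Sum>h\<in>I. F h w) k = (\<Sum>h\<in>I. wirt_coeff (F h) k)"
  unfolding wirt_coeff_def sum_divide_distrib[symmetric] sum_subtractf sum_distrib_left ..

lemma wirt_coeff_add: "wirt_coeff (\<lambda>w. F w + G w) k = wirt_coeff F k + wirt_coeff G k"
  by (simp add: wirt_coeff_def algebra_simps add_divide_distrib diff_divide_distrib)

lemma wirt_coeff_cmult: "wirt_coeff (\<lambda>w. c * F w) k = c * wirt_coeff F k"
  by (simp add: wirt_coeff_def algebra_simps)

lemma wirt_coeff_multc: "wirt_coeff (\<lambda>w. F w * c) k = wirt_coeff F k * c"
  by (simp add: wirt_coeff_def algebra_simps)

lemmas wirt_coeff_linear = wirt_coeff_sum wirt_coeff_add wirt_coeff_cmult wirt_coeff_multc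

lemma axis_i_eq_scale: "axis k (\<i>::complex) = \<i> *s axis k 1"
  by (simp add: vec_eq_iff axis_def)

lemma wirt_coeff_clinear:
  "(\<And>c x. D (c *s x) = c * D x) \<Longrightarrow> wirt_coeff D k = D (axis k 1)"
  by (simp add: wirt_coeff_def axis_i_eq_scale)

lemma wirt_coeff_cnj_clinear:
  "(\<And>c x. D (c *s x) = c * D x) \<Longrightarrow> wirt_coeff (\<lambda>v. cnj (D v)) k = 0"
  by (simp add: wirt_coeff_def axis_i_eq_scale)

lemma linear_eq_wirt_coeff_sum:
  assumes "linear D"
  shows "D w = (\<Sum>h\<in>UNIV. wirt_coeff D h * w$h + wirtc_coeff D h * cnj (w$h))"
proof -
  have decomp: "w = (\<Sum>h\<in>UNIV. Re (w$h) *\<^sub>R axis h 1 + Im (w$h) *\<^sub>R axis h \<i>)"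
    by (simp add: vec_eq_iff axis_def complex_eq_iff if_distrib sum.If_cases cong del: if_weak_cong)
  have re_im: "Re c *\<^sub>R X + Im c *\<^sub>R Y = (X - \<i> * Y) / 2 * c + (X + \<i> * Y) / 2 * cnj c"
    for c X Y :: complex
    by (cases c) (simp add: Complex_eq scaleR_conv_of_real field_simps)
  have "D w = (\<Sum>h\<in>UNIV. Re (w$h) *\<^sub>R D (axis h 1) + Im (w$h) *\<^sub>R D (axis h \<i>))"
    by (subst decomp) (simp add: linear_sum[OF assms] linear_add[OF assms] linear_scale[OF assms])
  also have "\<dots> = (\<Sum>h\<in>UNIV. wirt_coeff D h * w$h + wirtc_coeff D h * cnj (w$h))"
    by (simp add: wirt_coeff_def wirtc_coeff_def re_im)
  finally show ?thesis .
qed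

lemma wirt_coeff_comp_clinear:
  assumes "linear B" and W: "\<And>c x. W (c *s x) = c *s W x"
  shows "wirt_coeff (\<lambda>w. B (W w)) k = (\<Sum>j\<in>UNIV. wirt_coeff B j * W (axis k 1) $ j)"
proof -
  let ?e = "W (axis k 1)"
  have "2 * wirt_coeff (\<lambda>w. B (W w)) k = B ?e - \<i> * B (\<i> *s ?e)"
    by (simp add: wirt_coeff_def axis_i_eq_scale W)
  also have "\<dots> = (\<Sum>j\<in>UNIV. 2 * (wirt_coeff B j * ?e $ j))"
    unfolding linear_eq_wirt_coeff_sum[OF assms(1), of ?e]
      linear_eq_wirt_coeff_sum[OF assms(1), of "\<i> *s ?e"] sum_distrib_left sum_subtractf[symmetric]
    by (rule sum.cong) (simp_all add: algebra_simps)
  finally show ?thesis by (simp add: sum_distrib_left[symmetric])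
qed

lemma wirtc_coeff_comp_clinear:
  assumes "linear B" and W: "\<And>c x. W (c *s x) = c *s W x"
  shows "wirtc_coeff (\<lambda>w. B (W w)) k = (\<Sum>j\<in>UNIV. wirtc_coeff B j * cnj (W (axis k 1) $ j))"
proof -
  let ?e = "W (axis k 1)"
  have "2 * wirtc_coeff (\<lambda>w. B (W w)) k = B ?e + \<i> * B (\<i> *s ?e)"
    by (simp add: wirtc_coeff_def axis_i_eq_scale W)
  also have "\<dots> = (\<Sum>j\<in>UNIV. 2 * (wirtc_coeff B j * cnj (?e $ j)))"
    unfolding linear_eq_wirt_coeff_sum[OF assms(1), of ?e]
      linear_eq_wirt_coeff_sum[OF assms(1), of "\<i> *s ?e"] sum_distrib_left sum.distrib[symmetric]
    by (rule sum.cong) (simp_all add: algebra_simps)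
  finally show ?thesis by (simp add: sum_distrib_left[symmetric])
qed

section \<open>Matrices\<close>

lemma matrix_vector_mult_axis_nth: "((A::'a::comm_semiring_1^'n^'m) *v axis k 1) $ j = A $ j $ k"
  by (simp add: matrix_vector_mult_def axis_def if_distrib sum.If_cases cong del: if_weak_cong)

lemma matrix_vector_mult_neg: "(- A) *v x = - (A *v (x::'a::ring_1^'n))"
  by (simp add: vec_eq_iff matrix_vector_mult_def sum_negf)

lemma
  assumes "invertible A"
  shows matrix_inv_right: "A ** matrix_inv A = mat 1"
    and matrix_inv_left: "matrix_inv A ** A = mat 1"
proof -
  have "A ** matrix_inv A = mat 1 \<and> matrix_inv A ** A = mat 1"
    using assms unfolding invertible_def matrix_inv_def by (rule someI_ex)
  then show "A ** matrix_inv A = mat 1" "matrix_inv A ** A = mat 1" by auto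
qed

lemma matrix_inv_cramer:
  fixes A :: "'a::field^'n^'n"
  assumes "invertible A"
  shows "matrix_inv A $ a $ b = det (\<chi> i j. if j = a then axis b 1 $ i else A $ i $ j) / det A"
proof -
  have "A *v (matrix_inv A *v axis b 1) = axis b 1"
    by (simp add: matrix_vector_mul_assoc matrix_inv_right[OF assms])
  then have "matrix_inv A *v axis b 1
      = (\<chi> k. det (\<chi> i j. if j = k then axis b 1 $ i else A $ i $ j) / det A)"
    using cramer assms invertible_det_nz by blast
  then show ?thesis by (simp add: vec_eq_iff matrix_vector_mult_axis_nth)
qed

lemma invertible_transpose: "invertible (A::'a::field^'n^'n) \<Longrightarrow> invertible (transpose A)"
  by (simp add: invertible_det_nz det_transpose)

definition cnj_matrix :: "complex^'n^'m \<Rightarrow> complex^'n^'m" where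
  "cnj_matrix A = (\<chi> i j. cnj (A $ i $ j))"

lemma invertible_cnj_matrix:
  assumes "invertible (A::complex^'n^'n)"
  shows "invertible (cnj_matrix A)"
proof -
  have cnj_mult: "cnj_matrix (B ** C) = cnj_matrix B ** cnj_matrix C" for B C :: "complex^'n^'n"
    by (simp add: cnj_matrix_def vec_eq_iff matrix_matrix_mult_def)
  have cnj_one: "cnj_matrix (mat 1 :: complex^'n^'n) = mat 1"
    by (simp add: cnj_matrix_def vec_eq_iff mat_def)
  show ?thesis
    unfolding invertible_def
    using matrix_inv_right[OF assms] matrix_inv_left[OF assms] cnj_mult cnj_one by metis
qed

lemma pullback_connection_identity:
  fixes R G :: "complex^'n^'n"
  assumes R: "invertible R" and G: "invertible G"
  shows "((Q + w v* G) v* cnj_matrix R) v* matrix_inv (transpose R ** G ** cnj_matrix R)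
       = matrix_inv R *v (Q v* matrix_inv G + w)"
proof -
  let ?G' = "transpose R ** G ** cnj_matrix R"
  let ?t = "matrix_inv R *v (Q v* matrix_inv G + w)"
  have "?t v* ?G' = (R *v ?t) v* G v* cnj_matrix R"
    by (simp add: vector_matrix_mul_assoc vector_transpose_matrix flip: vector_matrix_mul_assoc)
  also have "\<dots> = (Q + w v* G) v* cnj_matrix R"
    by (simp add: matrix_vector_mul_assoc matrix_inv_right[OF R] vector_matrix_left_distrib
        vector_matrix_mul_assoc matrix_inv_left[OF G])
  finally have "?t v* ?G' = (Q + w v* G) v* cnj_matrix R" .
  then have "((Q + w v* G) v* cnj_matrix R) v* matrix_inv ?G' = ?t v* (?G' ** matrix_inv ?G')"
    by (simp only: vector_matrix_mul_assoc[symmetric])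
  also have "\<dots> = ?t"
    using R G by (simp add: matrix_inv_right invertible_mult invertible_transpose invertible_cnj_matrix)
  finally show ?thesis .
qed

section \<open>Derivatives of vector- and matrix-valued maps\<close>

lemma has_derivative_vec_componentwise:
  fixes f :: "'a::real_normed_vector \<Rightarrow> complex^'n"
  assumes "\<And>i. ((\<lambda>x. f x $ i) has_derivative (\<lambda>h. f' h $ i)) (at a)"
  shows "(f has_derivative f') (at a)"
proof -
  have "\<forall>b\<in>Basis. ((\<lambda>x. f x \<bullet> b) has_derivative (\<lambda>h. f' h \<bullet> b)) (at a within UNIV)"
  proof
    fix b :: "complex^'n" assume "b \<in> Basis"
    then obtain i u where "b = axis i u" by (auto simp: Basis_vec_def)
    then show "((\<lambda>x. f x \<bullet> b) has_derivative (\<lambda>h. f' h \<bullet> b)) (at a within UNIV)"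
      using has_derivative_inner_left[OF assms[of i]] by (simp add: inner_axis)
  qed
  then show ?thesis by (subst has_derivative_componentwise_within)
qed

lemma has_derivative_partial:
  assumes "(f has_derivative D) (at (x, y))"
  shows "((\<lambda>y'. f (x, y')) has_derivative (\<lambda>w. D (0, w))) (at y)"
    and "((\<lambda>x'. f (x', y)) has_derivative (\<lambda>v. D (v, 0))) (at x)"
  using has_derivative_compose[OF has_derivative_Pair[OF has_derivative_const has_derivative_ident] assms]
    has_derivative_compose[OF has_derivative_Pair[OF has_derivative_ident has_derivative_const] assms]
  by simp_all

lemma linear_has_derivative: "(f has_derivative D) F \<Longrightarrow> linear D"
  using has_derivative_bounded_linear bounded_linear.linear by blast

lemma differentiable_of_real:
  "f differentiable F \<Longrightarrow> (\<lambda>x. (of_real (f x) :: 'a::real_normed_algebra_1)) differentiable F"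
  unfolding differentiable_def using has_derivative_of_real by blast

lemma differentiable_prod:
  fixes f :: "'i \<Rightarrow> 'a::real_normed_vector \<Rightarrow> 'b::real_normed_field"
  assumes "\<And>i. i \<in> I \<Longrightarrow> f i differentiable (at x)"
  shows "(\<lambda>x. \<Prod>i\<in>I. f i x) differentiable (at x)"
proof -
  obtain D where "\<forall>i\<in>I. (f i has_derivative D i) (at x)"
    using assms unfolding differentiable_def by metis
  then show ?thesis
    unfolding differentiable_def by (blast intro: has_derivative_prod)
qed

lemma differentiable_det:
  fixes M :: "'a::real_normed_vector \<Rightarrow> 'b::real_normed_field^'n^'n"
  assumes "\<And>i j. (\<lambda>x. M x $ i $ j) differentiable (at a)"
  shows "(\<lambda>x. det (M x)) differentiable (at a)"
proof -
  have "(\<lambda>x. of_int (sign p) * (\<Prod>i\<in>UNIV. M x $ i $ p i)) differentiable (at a)" for p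
    by (intro differentiable_mult differentiable_const differentiable_prod assms)
  then show ?thesis
    unfolding det_def by (intro differentiable_sum) (auto simp: finite_permutations)
qed

lemma holo_on_has_derivative:
  assumes "holo_on U f" "z \<in> U"
  shows "(f has_derivative frechet_derivative f (at z)) (at z)"
    and "frechet_derivative f (at z) (c *s x) = c * frechet_derivative f (at z) x"
proof -
  obtain D where D: "(f has_derivative D) (at z)" "\<forall>c x. D (c *s x) = c * D x"
    using assms unfolding holo_on_def by blast
  moreover have "frechet_derivative f (at z) = D" using frechet_derivative_at[OF D(1)] by simp
  ultimately show "(f has_derivative frechet_derivative f (at z)) (at z)"
    and "frechet_derivative f (at z) (c *s x) = c * frechet_derivative f (at z) x"
    by simp_all
qed

lemma has_derivative_holo_matrix_vector:
  fixes \<rho> :: "complex^'n \<Rightarrow> complex^'n^'n"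
  assumes holo: "\<And>i j. holo_on U (\<lambda>z. \<rho> z $ i $ j)" and "z \<in> U"
  obtains W where "((\<lambda>z'. \<rho> z' *v u) has_derivative W) (at z)"
    and "\<And>c x. W (c *s x) = c *s W x"
    and "W (axis k 1) = (\<chi> i j. wirt (\<lambda>z'. \<rho> z' $ i $ j) z k) *v u"
proof
  define Dr where "Dr i j = frechet_derivative (\<lambda>z'. \<rho> z' $ i $ j) (at z)" for i j
  have dr: "((\<lambda>z'. \<rho> z' $ i $ j) has_derivative Dr i j) (at z)" for i j
    unfolding Dr_def by (rule holo_on_has_derivative(1)[OF holo \<open>z \<in> U\<close>])
  have cl: "Dr i j (c *s x) = c * Dr i j x" for i j c x
    unfolding Dr_def by (rule holo_on_has_derivative(2)[OF holo \<open>z \<in> U\<close>])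
  define W where "W v = (\<chi> i. \<Sum>\<gamma>\<in>UNIV. Dr i \<gamma> v * u $ \<gamma>)" for v
  show "((\<lambda>z'. \<rho> z' *v u) has_derivative W) (at z)"
    unfolding W_def matrix_vector_mult_def
    by (intro has_derivative_vec_componentwise) (simp add: dr has_derivative_sum has_derivative_mult_left)
  show "W (c *s x) = c *s W x" for c x
    by (simp add: W_def cl vec_eq_iff sum_distrib_left algebra_simps)
  have "wirt (\<lambda>z'. \<rho> z' $ i $ j) z k = Dr i j (axis k 1)" for i j
    unfolding wirt_eq_wirt_coeff[OF dr] by (rule wirt_coeff_clinear[OF cl])
  then show "W (axis k 1) = (\<chi> i j. wirt (\<lambda>z'. \<rho> z' $ i $ j) z k) *v u"
    by (simp add: W_def vec_eq_iff matrix_vector_mult_def)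
qed

lemma differentiable_matrix_inv:
  fixes M :: "'a::real_normed_vector \<Rightarrow> 'b::real_normed_field^'n^'n"
  assumes "open U" "z \<in> U" "\<And>x. x \<in> U \<Longrightarrow> invertible (M x)"
    and "\<And>i j. (\<lambda>x. M x $ i $ j) differentiable (at z)"
  shows "(\<lambda>x. matrix_inv (M x) $ a $ b) differentiable (at z)"
proof -
  let ?C = "\<lambda>x. det (\<chi> i j. if j = a then axis b 1 $ i else M x $ i $ j) / det (M x)"
  have "(\<lambda>x. (\<chi> i j. if j = a then axis b 1 $ i else M x $ i $ j) $ i $ j) differentiable (at z)"
    for i j by (cases "j = a") (simp_all add: assms(4))
  then have "?C differentiable (at z)"
    using assms invertible_det_nz
    by (intro differentiable_divide differentiable_det) blast+
  then obtain D where "(?C has_derivative D) (at z)" unfolding differentiable_def by blast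
  then have "((\<lambda>x. matrix_inv (M x) $ a $ b) has_derivative D) (at z)"
    by (rule has_derivative_transform_within_open[OF _ assms(1,2)])
      (simp add: matrix_inv_cramer assms(3))
  then show ?thesis unfolding differentiable_def by blast
qed

text \<open>Obtained by differentiating \<open>\<rho>\<^sup>-\<^sup>1 \<rho> = 1\<close> on \<open>U\<close>.\<close>

lemma wirt_matrix_inv:
  fixes \<rho> :: "complex^'n \<Rightarrow> complex^'n^'n"
  assumes "open U" "z \<in> U"
    and diff: "\<And>i j. (\<lambda>z'. \<rho> z' $ i $ j) differentiable (at z)"
    and inv: "\<And>z. z \<in> U \<Longrightarrow> invertible (\<rho> z)"
  shows "(\<chi> a b. wirt (\<lambda>z'. matrix_inv (\<rho> z') $ a $ b) z k) ** \<rho> z =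
     - (matrix_inv (\<rho> z) ** (\<chi> i j. wirt (\<lambda>z'. \<rho> z' $ i $ j) z k))"
proof -
  define Dr where "Dr i j = frechet_derivative (\<lambda>z'. \<rho> z' $ i $ j) (at z)" for i j
  have dr: "((\<lambda>z'. \<rho> z' $ i $ j) has_derivative Dr i j) (at z)" for i j
    unfolding Dr_def frechet_derivative_works[symmetric] by (rule diff)
  define Di where "Di a b = frechet_derivative (\<lambda>z'. matrix_inv (\<rho> z') $ a $ b) (at z)" for a b
  have di: "((\<lambda>z'. matrix_inv (\<rho> z') $ a $ b) has_derivative Di a b) (at z)" for a b
    unfolding Di_def frechet_derivative_works[symmetric]
    by (rule differentiable_matrix_inv[OF assms(1,2) inv diff])
  have "(\<Sum>h\<in>UNIV. wirt (\<lambda>z'. matrix_inv (\<rho> z') $ a $ h) z k * \<rho> z $ h $ g)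
      = - (\<Sum>h\<in>UNIV. matrix_inv (\<rho> z) $ a $ h * wirt (\<lambda>z'. \<rho> z' $ h $ g) z k)" for a g
  proof -
    let ?G = "\<lambda>z'. \<Sum>h\<in>UNIV. matrix_inv (\<rho> z') $ a $ h * \<rho> z' $ h $ g"
    let ?DG = "\<lambda>v. \<Sum>h\<in>UNIV. matrix_inv (\<rho> z) $ a $ h * Dr h g v + Di a h v * \<rho> z $ h $ g"
    have "(?G has_derivative ?DG) (at z)"
      by (intro has_derivative_sum has_derivative_mult di dr)
    moreover have "(?G has_derivative (\<lambda>v. 0)) (at z)"
    proof (rule has_derivative_transform_within_open[OF _ assms(1,2)])
      show "((\<lambda>x. mat 1 $ a $ g) has_derivative (\<lambda>v. 0)) (at z)" by simp
      show "mat 1 $ a $ g = ?G x" if "x \<in> U" for x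
        using matrix_inv_left[OF inv[OF that]] by (simp add: matrix_matrix_mult_def vec_eq_iff)
    qed
    ultimately have "?DG = (\<lambda>v. 0)" by (rule has_derivative_unique)
    then have "wirt_coeff ?DG k = 0" by (simp add: wirt_coeff_def)
    then show ?thesis
      by (simp add: wirt_coeff_linear wirt_eq_wirt_coeff[OF dr] wirt_eq_wirt_coeff[OF di]
          sum.distrib eq_neg_iff_add_eq_0 add.commute)
  qed
  then show ?thesis by (simp add: vec_eq_iff matrix_matrix_mult_def)
qed

section \<open>Derivatives of the Lagrangian\<close>

lemma C2_on_differentiable_at:
  assumes "C2_on S f" "x \<in> S"
  shows "f differentiable (at x)"
    and "(\<lambda>p. frechet_derivative f (at p) v) differentiable (at x)"
  using assms at_within_open[of x S]
  unfolding C2_on_def differentiable_on_def by metis+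

definition DL :: "(complex^'n \<Rightarrow> complex^'n \<Rightarrow> real) \<Rightarrow> (complex^'n) \<times> (complex^'n)
    \<Rightarrow> (complex^'n) \<times> (complex^'n) \<Rightarrow> real" where
  "DL L p = frechet_derivative (\<lambda>q. L (fst q) (snd q)) (at p)"

definition Lbar :: "(complex^'n \<Rightarrow> complex^'n \<Rightarrow> real) \<Rightarrow> 'n \<Rightarrow> (complex^'n) \<times> (complex^'n) \<Rightarrow> complex" where
  "Lbar L j p = wirtc_coeff (\<lambda>w. complex_of_real (DL L p (0, w))) j"

definition DLbar :: "(complex^'n \<Rightarrow> complex^'n \<Rightarrow> real) \<Rightarrow> 'n \<Rightarrow> (complex^'n) \<times> (complex^'n)
    \<Rightarrow> (complex^'n) \<times> (complex^'n) \<Rightarrow> complex" where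
  "DLbar L j p = frechet_derivative (Lbar L j) (at p)"

context
  fixes U :: "(complex^'n) set" and L :: "complex^'n \<Rightarrow> complex^'n \<Rightarrow> real"
  assumes L_C2: "C2_on (U \<times> UNIV) (\<lambda>p. L (fst p) (snd p))"
begin

lemma has_derivative_L:
  "z \<in> U \<Longrightarrow> ((\<lambda>p. L (fst p) (snd p)) has_derivative DL L (z, y)) (at (z, y))"
  unfolding DL_def frechet_derivative_works[symmetric]
  by (rule C2_on_differentiable_at(1)[OF L_C2]) simp

lemma has_derivative_Lbar:
  assumes "z \<in> U"
  shows "(Lbar L j has_derivative DLbar L j (z, y)) (at (z, y))"
proof -
  have "(\<lambda>p. DL L p v) differentiable (at (z, y))" for v
    unfolding DL_def using assms by (intro C2_on_differentiable_at(2)[OF L_C2]) simp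
  then have "Lbar L j differentiable (at (z, y))"
    unfolding Lbar_def[abs_def] wirtc_coeff_def
    by (intro differentiable_divide differentiable_add differentiable_mult differentiable_const
        differentiable_of_real) simp_all
  then show ?thesis unfolding DLbar_def frechet_derivative_works[symmetric] .
qed

lemma has_derivative_Lc_fibre:
  "z \<in> U \<Longrightarrow> ((\<lambda>y'. Lc L z y') has_derivative (\<lambda>w. of_real (DL L (z, y) (0, w)))) (at y)"
  unfolding Lc_def
  using has_derivative_of_real[OF has_derivative_partial(1)[OF has_derivative_L]] by simp

lemma d_ybar_Lc: "z \<in> U \<Longrightarrow> d_ybar (Lc L) z y j = Lbar L j (z, y)"
  unfolding d_ybar_def Lbar_def by (rule wirtc_eq_wirtc_coeff[OF has_derivative_Lc_fibre])

lemma metric_eq_wirt_coeff: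
  "z \<in> U \<Longrightarrow> metric L z y $ i $ j = wirt_coeff (\<lambda>w. DLbar L j (z, y) (0, w)) i"
  unfolding metric_def d_y_def
  by (simp add: d_ybar_Lc wirt_eq_wirt_coeff[OF has_derivative_partial(1)[OF has_derivative_Lbar]])

lemma d_z_d_ybar_Lc:
  assumes "open U" "z \<in> U"
  shows "d_z (\<lambda>z' y'. d_ybar (Lc L) z' y' j) z y k = wirt_coeff (\<lambda>v. DLbar L j (z, y) (v, 0)) k"
proof -
  have "((\<lambda>z'. d_ybar (Lc L) z' y j) has_derivative (\<lambda>v. DLbar L j (z, y) (v, 0))) (at z)"
    using has_derivative_partial(2)[OF has_derivative_Lbar[OF assms(2)]]
    by (rule has_derivative_transform_within_open[OF _ assms]) (simp add: d_ybar_Lc)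
  then show ?thesis unfolding d_z_def by (rule wirt_eq_wirt_coeff)
qed

lemma wirt_coeff_DLbar_fibre_comp:
  assumes "z \<in> U" and W: "\<And>c x. W (c *s x) = c *s W x"
  shows "wirt_coeff (\<lambda>v. DLbar L h (z, y) (0, W v)) k
    = (\<Sum>j\<in>UNIV. metric L z y $ j $ h * W (axis k 1) $ j)"
proof -
  have "linear (\<lambda>w. DLbar L h (z, y) (0, w))"
    by (rule linear_has_derivative[OF has_derivative_partial(1)[OF has_derivative_Lbar[OF assms(1)]]])
  from wirt_coeff_comp_clinear[where B = "\<lambda>w. DLbar L h (z, y) (0, w)", OF this W]
  show ?thesis by (simp add: metric_eq_wirt_coeff[OF assms(1)])
qed

lemma d_ybar_Lstar:
  assumes "z \<in> U"
  shows "d_ybar (Lc (Lstar \<rho> L)) z u \<beta> = (\<Sum>h\<in>UNIV. cnj (\<rho> z $ h $ \<beta>) * Lbar L h (z, \<rho> z *v u))"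
proof -
  let ?A = "\<lambda>w. complex_of_real (DL L (z, \<rho> z *v u) (0, w))"
  have dA: "((\<lambda>y'. Lc L z y') has_derivative ?A) (at (\<rho> z *v u))"
    by (rule has_derivative_Lc_fibre[OF assms])
  have "((\<lambda>u'. Lc (Lstar \<rho> L) z u') has_derivative (\<lambda>w. ?A (\<rho> z *v w))) (at u)"
    using has_derivative_compose[OF bounded_linear.has_derivative[OF
          matrix_vector_mul_bounded_linear has_derivative_ident] dA]
    by (simp add: Lc_def Lstar_def)
  then have "d_ybar (Lc (Lstar \<rho> L)) z u \<beta> = wirtc_coeff (\<lambda>w. ?A (\<rho> z *v w)) \<beta>"
    unfolding d_ybar_def by (rule wirtc_eq_wirtc_coeff)
  also have "\<dots> = (\<Sum>h\<in>UNIV. wirtc_coeff ?A h * cnj (\<rho> z $ h $ \<beta>))"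
    by (simp add: wirtc_coeff_comp_clinear[OF linear_has_derivative[OF dA]]
        vector_scalar_commute matrix_vector_mult_axis_nth)
  finally show ?thesis by (simp add: Lbar_def mult.commute)
qed

lemma metric_Lstar:
  assumes "z \<in> U"
  shows "metric (Lstar \<rho> L) z u = transpose (\<rho> z) ** metric L z (\<rho> z *v u) ** cnj_matrix (\<rho> z)"
proof -
  let ?p = "(z, \<rho> z *v u)"
  have dB: "((\<lambda>y'. Lbar L h (z, y')) has_derivative (\<lambda>w. DLbar L h ?p (0, w))) (at (\<rho> z *v u))" for h
    by (rule has_derivative_partial(1)[OF has_derivative_Lbar[OF assms]])
  have "((\<lambda>u'. \<Sum>h\<in>UNIV. cnj (\<rho> z $ h $ \<beta>) * Lbar L h (z, \<rho> z *v u')) has_derivative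
         (\<lambda>w. \<Sum>h\<in>UNIV. cnj (\<rho> z $ h $ \<beta>) * DLbar L h ?p (0, \<rho> z *v w))) (at u)" for \<beta>
    using has_derivative_compose[OF bounded_linear.has_derivative[OF
          matrix_vector_mul_bounded_linear has_derivative_ident] dB]
    by (intro has_derivative_sum has_derivative_mult_right) simp
  then have "metric (Lstar \<rho> L) z u $ \<alpha> $ \<beta>
      = wirt_coeff (\<lambda>w. \<Sum>h\<in>UNIV. cnj (\<rho> z $ h $ \<beta>) * DLbar L h ?p (0, \<rho> z *v w)) \<alpha>" for \<alpha> \<beta>
    unfolding metric_def d_y_def vec_lambda_beta d_ybar_Lstar[OF assms] by (rule wirt_eq_wirt_coeff)
  also have "\<dots> \<alpha> \<beta> = (\<Sum>h\<in>UNIV. cnj (\<rho> z $ h $ \<beta>)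
      * (\<Sum>j\<in>UNIV. metric L z (\<rho> z *v u) $ j $ h * \<rho> z $ j $ \<alpha>))" for \<alpha> \<beta>
    by (simp add: wirt_coeff_linear wirt_coeff_DLbar_fibre_comp[OF assms] vector_scalar_commute
        matrix_vector_mult_axis_nth)
  finally show ?thesis
    by (simp add: vec_eq_iff matrix_matrix_mult_def transpose_def cnj_matrix_def
        sum_distrib_left sum_distrib_right mult_ac)
qed

lemma d_z_d_ybar_Lstar:
  fixes \<rho> :: "complex^'n \<Rightarrow> complex^'n^'n"
  assumes "open U" "z \<in> U" and holo: "\<And>i j. holo_on U (\<lambda>z. \<rho> z $ i $ j)"
  shows "(\<chi> \<beta>. d_z (\<lambda>z' u'. d_ybar (Lc (Lstar \<rho> L)) z' u' \<beta>) z u k)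
    = ((\<chi> h. d_z (\<lambda>z' y'. d_ybar (Lc L) z' y' h) z (\<rho> z *v u) k)
       + ((\<chi> i j. wirt (\<lambda>z'. \<rho> z' $ i $ j) z k) *v u) v* metric L z (\<rho> z *v u))
      v* cnj_matrix (\<rho> z)"
proof -
  let ?p = "(z, \<rho> z *v u)"
  let ?D = "\<lambda>h. DLbar L h ?p"
  obtain W where dW: "((\<lambda>z'. \<rho> z' *v u) has_derivative W) (at z)"
    and W_clinear: "\<And>c x. W (c *s x) = c *s W x"
    and W_axis: "W (axis k 1) = (\<chi> i j. wirt (\<lambda>z'. \<rho> z' $ i $ j) z k) *v u"
    using has_derivative_holo_matrix_vector[OF holo assms(2), where u = u and k = k] by blast
  define Dr where "Dr i j = frechet_derivative (\<lambda>z'. \<rho> z' $ i $ j) (at z)" for i j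
  have dr: "((\<lambda>z'. \<rho> z' $ i $ j) has_derivative Dr i j) (at z)" for i j
    unfolding Dr_def by (rule holo_on_has_derivative(1)[OF holo assms(2)])
  have Dr_clinear: "Dr i j (c *s x) = c * Dr i j x" for i j c x
    unfolding Dr_def by (rule holo_on_has_derivative(2)[OF holo assms(2)])
  have "((\<lambda>z'. Lbar L h (z', \<rho> z' *v u)) has_derivative (\<lambda>v. ?D h (v, W v))) (at z)" for h
    using has_derivative_compose[OF has_derivative_Pair[OF has_derivative_ident dW]
        has_derivative_Lbar[OF assms(2)]] by simp
  then have "((\<lambda>z'. \<Sum>h\<in>UNIV. cnj (\<rho> z' $ h $ \<beta>) * Lbar L h (z', \<rho> z' *v u)) has_derivative
      (\<lambda>v. \<Sum>h\<in>UNIV. cnj (\<rho> z $ h $ \<beta>) * ?D h (v, W v) + cnj (Dr h \<beta> v) * Lbar L h ?p)) (at z)"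
    for \<beta> by (intro has_derivative_sum has_derivative_mult has_derivative_cnj dr)
  then have "((\<lambda>z'. d_ybar (Lc (Lstar \<rho> L)) z' u \<beta>) has_derivative
      (\<lambda>v. \<Sum>h\<in>UNIV. cnj (\<rho> z $ h $ \<beta>) * ?D h (v, W v) + cnj (Dr h \<beta> v) * Lbar L h ?p)) (at z)"
    for \<beta> by (rule has_derivative_transform_within_open[OF _ assms(1,2)]) (simp add: d_ybar_Lstar)
  then have d_z_eq: "d_z (\<lambda>z' u'. d_ybar (Lc (Lstar \<rho> L)) z' u' \<beta>) z u k
      = wirt_coeff (\<lambda>v. \<Sum>h\<in>UNIV. cnj (\<rho> z $ h $ \<beta>) * ?D h (v, W v) + cnj (Dr h \<beta> v) * Lbar L h ?p) k"
    for \<beta> unfolding d_z_def by (rule wirt_eq_wirt_coeff)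
  have D_split: "?D h (v, W v) = ?D h (v, 0) + ?D h (0, W v)" for h v
    using linear_add[OF linear_has_derivative[OF has_derivative_Lbar[OF assms(2),
          where j = h and y = "\<rho> z *v u"]], of "(v, 0)" "(0, W v)"] by simp
  have "wirt_coeff (\<lambda>v. cnj (Dr h \<beta> v)) k = 0" for h \<beta>
    by (rule wirt_coeff_cnj_clinear[OF Dr_clinear])
  then show ?thesis
    by (simp add: vec_eq_iff d_z_eq wirt_coeff_linear D_split W_axis
        wirt_coeff_DLbar_fibre_comp[OF assms(2) W_clinear]
        d_z_d_ybar_Lc[OF assms(1,2)] vector_matrix_mult_def cnj_matrix_def mult.commute)
qed

end

theorem proposition3p1:
  fixes U :: "(complex^'n) set"
    and \<rho> :: "complex^'n \<Rightarrow> complex^'n^'n"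
    and L :: "complex^'n \<Rightarrow> complex^'n \<Rightarrow> real"
  assumes U_open: "open U"
    and \<rho>_holo: "\<And>k \<alpha>. holo_on U (\<lambda>z. \<rho> z $ k $ \<alpha>)"
    and \<rho>_inv: "\<And>z. z \<in> U \<Longrightarrow> invertible (\<rho> z)"
    and L_C2: "C2_on (U \<times> UNIV) (\<lambda>p. L (fst p) (snd p))"
    and g_nondeg: "\<And>z \<eta>. z \<in> U \<Longrightarrow> invertible (metric L z \<eta>)"
    and z_in: "z \<in> U"
  shows "induced_conn \<rho> L z u \<alpha> k =
           (\<Sum>\<beta>\<in>UNIV. metric_inv (Lstar \<rho> L) z u $ \<beta> $ \<alpha>
                      * d_z (\<lambda>z' u'. d_ybar (Lc (Lstar \<rho> L)) z' u' \<beta>) z u k)"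
proof -
  define \<eta> where "\<eta> = \<rho> z *v u"
  define G where "G = metric L z \<eta>"
  define Q where "Q = (\<chi> h. d_z (\<lambda>z' y'. d_ybar (Lc L) z' y' h) z \<eta> k)"
  define d\<rho> where "d\<rho> = (\<chi> i j. wirt (\<lambda>z'. \<rho> z' $ i $ j) z k)"
  define d\<rho>_inv where "d\<rho>_inv = (\<chi> a b. wirt (\<lambda>z'. matrix_inv (\<rho> z') $ a $ b) z k)"
  have CL_eq: "(\<chi> h. CL_conn L z \<eta> h k) = Q v* matrix_inv G"
    by (simp add: CL_conn_def Q_def G_def metric_inv_def vec_eq_iff vector_matrix_mult_def mult.commute)
  have \<rho>_diff: "(\<lambda>z'. \<rho> z' $ i $ j) differentiable (at z)" for i j
    using holo_on_has_derivative(1)[OF \<rho>_holo z_in] by (auto simp: differentiable_def)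
  have d\<rho>_inv_eq: "d\<rho>_inv *v \<eta> = - (matrix_inv (\<rho> z) *v (d\<rho> *v u))"
    unfolding \<eta>_def d\<rho>_inv_def d\<rho>_def matrix_vector_mul_assoc
    by (simp only: wirt_matrix_inv[OF U_open z_in \<rho>_diff \<rho>_inv] matrix_vector_mult_neg)
  have "induced_conn \<rho> L z u \<alpha> k
      = (matrix_inv (\<rho> z) *v (\<chi> h. CL_conn L z \<eta> h k) - d\<rho>_inv *v \<eta>) $ \<alpha>"
    by (simp add: induced_conn_def Let_def \<eta>_def d\<rho>_inv_def matrix_vector_mult_def)
  also have "\<dots> = (matrix_inv (\<rho> z) *v (Q v* matrix_inv G + d\<rho> *v u)) $ \<alpha>"
    by (simp add: CL_eq d\<rho>_inv_eq matrix_vector_right_distrib)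
  also have "\<dots> = (((Q + (d\<rho> *v u) v* G) v* cnj_matrix (\<rho> z))
      v* matrix_inv (metric (Lstar \<rho> L) z u)) $ \<alpha>"
    by (simp add: metric_Lstar[OF L_C2 z_in] pullback_connection_identity \<rho>_inv g_nondeg z_in
        G_def \<eta>_def)
  also have "\<dots> = ((\<chi> \<beta>. d_z (\<lambda>z' u'. d_ybar (Lc (Lstar \<rho> L)) z' u' \<beta>) z u k)
      v* matrix_inv (metric (Lstar \<rho> L) z u)) $ \<alpha>"
    unfolding d_z_d_ybar_Lstar[OF L_C2 U_open z_in \<rho>_holo] Q_def G_def d\<rho>_def \<eta>_def ..
  also have "\<dots> = (\<Sum>\<beta>\<in>UNIV. metric_inv (Lstar \<rho> L) z u $ \<beta> $ \<alpha>
                      * d_z (\<lambda>z' u'. d_ybar (Lc (Lstar \<rho> L)) z' u' \<beta>) z u k)"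
    by (simp add: vector_matrix_mult_def metric_inv_def mult.commute)
  finally show ?thesis .
qed

end
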